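(* Let $b\ge2$ be an integer, $\lambda\in(1/b,1)$, and let $\phi$ be a real analytic $\mathbb{Z}$-periodic function satisfying condition (H). Then there exist $\varepsilon_1>0$ and a positive integer $Q_1$ such that for every $f\in\mathcal{F}_1$: $\sup_{x\in[0,1]}|f'(x)|\ge\varepsilon_1$, and for every $x\in[0,1]$ there exists $k\in\{1,\dots,Q_1\}$ with $|f^{(k)}(x)|\ge\varepsilon_1$.
   Context: $\Sigma=\{0,\dots,b-1\}^{\mathbb{Z}_+}$, $\gamma=1/(b\lambda)$, $Y(x,\mathbf{j})=-\sum_{n\ge1}\gamma^n\phi'\!\left(\frac{x}{b^n}+\frac{j_1}{b^n}+\cdots+\frac{j_n}{b}\right)$, $\Gamma_{\mathbf{j}}(x)=\int_0^xY(t,\mathbf{j})dt$. Condition (H): $Y(\cdot,\mathbf{j})-Y(\cdot,\mathbf{i})\not\equiv0$ for all $\mathbf{i}\ne\mathbf{j}$. For $n\in\mathbb{Z}_+$, $\mathcal{F}_n=\{\Gamma_{\mathbf{u}}-\Gamma_{\mathbf{v}}:\mathbf{u},\mathbf{v}\in\Sigma,\ u_n\ne v_n,\ u_j=v_j\text{ for }1\le j<n\}$. *)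

theory Defs
  imports "HOL-Analysis.Analysis"
begin

definition real_analytic :: "(real \<Rightarrow> real) \<Rightarrow> bool" where
  "real_analytic \<phi> \<longleftrightarrow>
     (\<forall>x0. \<exists>r>0. \<exists>a::nat \<Rightarrow> real. \<forall>x. \<bar>x - x0\<bar> < r \<longrightarrow> (\<lambda>n. a n * (x - x0) ^ n) sums \<phi> x)"

text \<open>Symbol space: sequences j_1, j_2, ... with digits in {0..b-1}; the unused
  entry at index 0 is normalised to 0 so that elements correspond exactly to
  sequences indexed by the positive integers.\<close>
definition SigmaSp :: "nat \<Rightarrow> (nat \<Rightarrow> nat) set" where
  "SigmaSp b = {j. j 0 = 0 \<and> (\<forall>n\<ge>1. j n < b)}"

definition Yfun :: "nat \<Rightarrow> real \<Rightarrow> (real \<Rightarrow> real) \<Rightarrow> real \<Rightarrow> (nat \<Rightarrow> nat) \<Rightarrow> real" where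
  "Yfun b lam \<phi> x j =
     - (\<Sum>m. let n = Suc m in
          (1 / (real b * lam)) ^ n *
          deriv \<phi> (x / real b ^ n + (\<Sum>k=1..n. real (j k) / real b ^ (n - k + 1))))"

definition Gammafun :: "nat \<Rightarrow> real \<Rightarrow> (real \<Rightarrow> real) \<Rightarrow> (nat \<Rightarrow> nat) \<Rightarrow> real \<Rightarrow> real" where
  "Gammafun b lam \<phi> j x =
     (if 0 \<le> x then integral {0..x} (\<lambda>t. Yfun b lam \<phi> t j)
      else - integral {x..0} (\<lambda>t. Yfun b lam \<phi> t j))"

definition condH :: "nat \<Rightarrow> real \<Rightarrow> (real \<Rightarrow> real) \<Rightarrow> bool" where
  "condH b lam \<phi> \<longleftrightarrow>
     (\<forall>i\<in>SigmaSp b. \<forall>j\<in>SigmaSp b. i \<noteq> j \<longrightarrow>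
        (\<exists>x. Yfun b lam \<phi> x j - Yfun b lam \<phi> x i \<noteq> 0))"

definition Fset :: "nat \<Rightarrow> real \<Rightarrow> (real \<Rightarrow> real) \<Rightarrow> nat \<Rightarrow> (real \<Rightarrow> real) set" where
  "Fset b lam \<phi> n =
     {(\<lambda>x. Gammafun b lam \<phi> u x - Gammafun b lam \<phi> v x) | u v.
        u \<in> SigmaSp b \<and> v \<in> SigmaSp b \<and> u n \<noteq> v n \<and> (\<forall>k. 1 \<le> k \<and> k < n \<longrightarrow> u k = v k)}"

end

theory Submission
  imports Defs
begin

(* Analyticity and periodicity of phi give Cauchy estimates |phi^(k)| <= C k! L^k on the whole
   line. Differentiating the series for Y termwise shows that every Y(., u) is smooth with
   estimates of the same kind, uniformly in u, so a difference Y(., u) - Y(., v) is determined by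
   its jet at any single point. Condition (H) therefore forbids all derivatives of such a
   difference to vanish at a point, and forbids the difference to vanish on (0, 1). The
   derivatives of Gamma_u - Gamma_v are those of Y(., u) - Y(., v); they depend continuously on
   (u, v, x) for the product topology on Sigma, and the pairs with u_1 ~= v_1 form a compact set.
   Compactness turns the two pointwise statements into the uniform bounds epsilon_1 and Q_1. *)

section \<open>Derivatives of real power series\<close>

lemma diffs_funpow:
  fixes a :: "nat \<Rightarrow> real"
  shows "(diffs ^^ k) a n = a (n + k) * fact (n + k) / fact n"
proof (induction k arbitrary: n)
  case 0
  then show ?case by simp
next
  case (Suc k)
  have "(diffs ^^ Suc k) a n = of_nat (Suc n) * (diffs ^^ k) a (Suc n)"
    by (simp add: diffs_def)
  also have "\<dots> = of_nat (Suc n) * (a (Suc n + k) * fact (Suc n + k) / fact (Suc n))"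
    using Suc by simp
  also have "\<dots> = a (n + Suc k) * fact (n + Suc k) / fact n"
    unfolding fact_Suc[of n] by (simp del: of_nat_Suc)
  finally show ?case .
qed

lemma fact_add_div_fact_le: "(fact (n + k) :: real) / fact n \<le> fact k * 2 ^ (n + k)"
proof -
  have "fact (n + k) = fact k * fact n * (n + k choose k)"
    using binomial_fact_lemma[of k "n + k"] by simp
  also have "\<dots> \<le> fact k * fact n * (2::nat) ^ (n + k)"
    by (intro mult_le_mono2 binomial_le_pow2)
  finally have "real (fact (n + k)) \<le> real (fact k * fact n * 2 ^ (n + k))"
    by (simp only: of_nat_le_iff)
  then show ?thesis
    by (simp add: divide_simps mult_ac)
qed

lemma diffs_funpow_term_bound:
  fixes a :: "nat \<Rightarrow> real"
  assumes coeff: "\<And>n. \<bar>a n\<bar> \<le> M / R ^ n" and "R > 0" and "\<bar>h\<bar> \<le> R / 4"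
  shows "\<bar>(diffs ^^ k) a n * h ^ n\<bar> \<le> M * fact k * (2 / R) ^ k * (1 / 2) ^ n"
proof -
  have "M \<ge> 0"
    using coeff[of 0] by simp
  have "\<bar>(diffs ^^ k) a n * h ^ n\<bar> = \<bar>a (n + k)\<bar> * (fact (n + k) / fact n) * \<bar>h\<bar> ^ n"
    by (simp add: diffs_funpow abs_mult power_abs)
  also have "\<dots> \<le> (M / R ^ (n + k)) * (fact k * 2 ^ (n + k)) * (R / 4) ^ n"
    by (intro mult_mono coeff fact_add_div_fact_le power_mono) (use assms \<open>M \<ge> 0\<close> in auto)
  also have "\<dots> = M * fact k * (2 / R) ^ k * (1 / 2) ^ n"
  proof -
    have "(4::real) ^ n = 2 ^ n * 2 ^ n"
      by (simp flip: power_mult_distrib)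
    moreover have "\<And>A B P Q F. A > 0 \<Longrightarrow> B > 0 \<Longrightarrow> P > 0 \<Longrightarrow>
        M / (A * B) * (F * (P * Q)) * (A / (P * P)) = M * F * (Q / B) * (1 / P)"
      by (simp add: field_simps)
    ultimately show ?thesis
      unfolding power_add power_divide power_one using \<open>R > 0\<close> by auto
  qed
  finally show ?thesis .
qed

locale real_power_series =
  fixes f :: "real \<Rightarrow> real" and x0 r :: real and a :: "nat \<Rightarrow> real"
  assumes radius_pos: "r > 0"
    and sums_f: "\<And>x. \<bar>x - x0\<bar> < r \<Longrightarrow> (\<lambda>n. a n * (x - x0) ^ n) sums f x"
begin

lemma summable_diffs_funpow: "\<bar>h\<bar> < r \<Longrightarrow> summable (\<lambda>n. (diffs ^^ k) a n * h ^ n)"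
proof (induction k arbitrary: h)
  case 0
  then show ?case using sums_f[of "x0 + h"] by (simp add: sums_iff)
next
  case (Suc k)
  then show ?case using termdiff_converges[of h r "(diffs ^^ k) a"] by auto
qed

lemma power_series_has_derivative:
  assumes "\<bar>x - x0\<bar> < r"
  shows "((\<lambda>y. \<Sum>n. (diffs ^^ k) a n * (y - x0) ^ n) has_real_derivative
           (\<Sum>n. (diffs ^^ Suc k) a n * (x - x0) ^ n)) (at x)"
proof -
  have "((\<lambda>z. \<Sum>n. (diffs ^^ k) a n * z ^ n) has_real_derivative
          (\<Sum>n. diffs ((diffs ^^ k) a) n * (x - x0) ^ n)) (at (x - x0))"
    by (rule termdiffs_strong'[of r]) (use summable_diffs_funpow assms in auto)
  then have "((\<lambda>y. \<Sum>n. (diffs ^^ k) a n * (y - x0) ^ n) has_real_derivative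
          (\<Sum>n. diffs ((diffs ^^ k) a) n * (x - x0) ^ n) * 1) (at x)"
    by (intro DERIV_chain2[where g = "\<lambda>y. y - x0"]) (auto intro!: derivative_eq_intros)
  then show ?thesis by simp
qed

lemma deriv_funpow_has_derivative_series:
  assumes "\<bar>x - x0\<bar> < r"
    and "\<And>z. \<bar>z - x0\<bar> < r \<Longrightarrow> (deriv ^^ k) f z = (\<Sum>n. (diffs ^^ k) a n * (z - x0) ^ n)"
  shows "((deriv ^^ k) f has_real_derivative (\<Sum>n. (diffs ^^ Suc k) a n * (x - x0) ^ n)) (at x)"
proof (rule has_field_derivative_transform_within_open)
  show "((\<lambda>y. \<Sum>n. (diffs ^^ k) a n * (y - x0) ^ n) has_real_derivative
          (\<Sum>n. (diffs ^^ Suc k) a n * (x - x0) ^ n)) (at x)"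
    using assms(1) by (rule power_series_has_derivative)
  show "open (ball x0 r)" "x \<in> ball x0 r"
    using assms(1) by (auto simp: dist_real_def abs_minus_commute)
qed (use assms(2) in \<open>auto simp: dist_real_def abs_minus_commute\<close>)

lemma deriv_funpow_eq_series:
  "\<bar>x - x0\<bar> < r \<Longrightarrow> (deriv ^^ k) f x = (\<Sum>n. (diffs ^^ k) a n * (x - x0) ^ n)"
proof (induction k arbitrary: x)
  case 0
  then show ?case using sums_f[of x] by (simp add: sums_iff)
next
  case (Suc k)
  then show ?case
    using DERIV_imp_deriv[OF deriv_funpow_has_derivative_series] by simp
qed

lemma deriv_funpow_has_derivative:
  "\<bar>x - x0\<bar> < r \<Longrightarrow> ((deriv ^^ k) f has_real_derivative (deriv ^^ Suc k) f x) (at x)"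
  using deriv_funpow_has_derivative_series[OF _ deriv_funpow_eq_series] deriv_funpow_eq_series[of x "Suc k"]
  by simp

lemma coefficients_bounded: "\<exists>M>0. \<forall>n. \<bar>a n\<bar> \<le> M / (r / 2) ^ n"
proof -
  have "summable (\<lambda>n. a n * (r / 2) ^ n)"
    using sums_f[of "x0 + r / 2"] radius_pos by (simp add: sums_iff)
  then have "Bseq (\<lambda>n. a n * (r / 2) ^ n)"
    by (intro convergent_imp_Bseq) (auto dest: summable_LIMSEQ_zero simp: convergent_def)
  then obtain M where "M > 0" "\<And>n. \<bar>a n * (r / 2) ^ n\<bar> \<le> M"
    by (elim BseqE) auto
  then show ?thesis
    using radius_pos by (auto simp: field_simps abs_mult)
qed

lemma deriv_funpow_cauchy_bound:
  "\<exists>M\<ge>0. \<forall>k y. \<bar>y - x0\<bar> < r / 8 \<longrightarrow> \<bar>(deriv ^^ k) f y\<bar> \<le> M * fact k * (4 / r) ^ k"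
proof -
  define R where "R = r / 2"
  have R: "R > 0"
    using radius_pos by (simp add: R_def)
  obtain M where M: "M > 0" "\<And>n. \<bar>a n\<bar> \<le> M / R ^ n"
    using coefficients_bounded unfolding R_def by blast
  have "\<bar>(deriv ^^ k) f y\<bar> \<le> 2 * M * fact k * (4 / r) ^ k" if y: "\<bar>y - x0\<bar> < r / 8" for k y
  proof -
    define h where "h = y - x0"
    have h: "\<bar>h\<bar> \<le> R / 4"
      using y by (simp add: h_def R_def)
    have term_bound: "\<bar>(diffs ^^ k) a n * h ^ n\<bar> \<le> M * fact k * (4 / r) ^ k * (1 / 2) ^ n" for n
      using diffs_funpow_term_bound[of a M R h k n] M R h by (simp add: R_def)
    have geometric: "summable (\<lambda>n. M * fact k * (4 / r) ^ k * (1 / 2 :: real) ^ n)"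
      by (intro summable_mult summable_geometric) simp
    have "\<bar>(deriv ^^ k) f y\<bar> = \<bar>\<Sum>n. (diffs ^^ k) a n * h ^ n\<bar>"
      using deriv_funpow_eq_series[of y k] y radius_pos by (simp add: h_def)
    also have "\<dots> \<le> (\<Sum>n. M * fact k * (4 / r) ^ k * (1 / 2 :: real) ^ n)"
      using norm_suminf_le[of "\<lambda>n. (diffs ^^ k) a n * h ^ n", OF _ geometric] term_bound
      by (simp add: real_norm_def)
    also have "\<dots> = 2 * M * fact k * (4 / r) ^ k"
      by (simp add: suminf_mult suminf_geometric summable_geometric)
    finally show ?thesis .
  qed
  then show ?thesis
    using M by (intro exI[of _ "2 * M"]) auto
qed

end

section \<open>Cauchy estimates\<close>

definition cauchy_bounded_on :: "(nat \<Rightarrow> real \<Rightarrow> real) \<Rightarrow> real set \<Rightarrow> bool" where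
  "cauchy_bounded_on F S \<longleftrightarrow> (\<exists>C\<ge>0. \<exists>L>0. \<forall>k. \<forall>y\<in>S. \<bar>F k y\<bar> \<le> C * fact k * L ^ k)"

lemma cauchy_bounded_on_subset:
  "cauchy_bounded_on F S \<Longrightarrow> T \<subseteq> S \<Longrightarrow> cauchy_bounded_on F T"
  unfolding cauchy_bounded_on_def by blast

lemma cauchy_bounded_on_Un:
  assumes "cauchy_bounded_on F S" and "cauchy_bounded_on F T"
  shows "cauchy_bounded_on F (S \<union> T)"
proof -
  obtain C L where CL: "C \<ge> 0" "L > 0" "\<And>k y. y \<in> S \<Longrightarrow> \<bar>F k y\<bar> \<le> C * fact k * L ^ k"
    using assms(1) unfolding cauchy_bounded_on_def by blast
  obtain C' L' where CL': "C' \<ge> 0" "L' > 0" "\<And>k y. y \<in> T \<Longrightarrow> \<bar>F k y\<bar> \<le> C' * fact k * L' ^ k"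
    using assms(2) unfolding cauchy_bounded_on_def by blast
  have "\<bar>F k y\<bar> \<le> max C C' * fact k * max L L' ^ k" if "y \<in> S \<union> T" for k y
  proof -
    have "C * fact k * L ^ k \<le> max C C' * fact k * max L L' ^ k"
      "C' * fact k * L' ^ k \<le> max C C' * fact k * max L L' ^ k"
      using CL CL' by (auto intro!: mult_mono power_mono)
    then show ?thesis
      using that order_trans[OF CL(3)] order_trans[OF CL'(3)] by blast
  qed
  then show ?thesis
    unfolding cauchy_bounded_on_def using CL CL' by (metis max.coboundedI1 max.strict_coboundedI1)
qed

lemma cauchy_bounded_on_Union:
  "finite \<U> \<Longrightarrow> (\<And>U. U \<in> \<U> \<Longrightarrow> cauchy_bounded_on F U) \<Longrightarrow> cauchy_bounded_on F (\<Union>\<U>)"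
proof (induction \<U> rule: finite_induct)
  case empty
  show ?case
    unfolding cauchy_bounded_on_def using zero_less_one by blast
next
  case (insert U \<U>)
  then show ?case
    by (simp add: cauchy_bounded_on_Un)
qed

lemma cauchy_bounded_on_compact:
  assumes "compact S"
    and "\<And>x. x \<in> S \<Longrightarrow> \<exists>U. open U \<and> x \<in> U \<and> cauchy_bounded_on F U"
  shows "cauchy_bounded_on F S"
proof -
  have "S \<subseteq> \<Union>{U. open U \<and> cauchy_bounded_on F U}"
    using assms(2) by blast
  then obtain \<U> where "\<U> \<subseteq> {U. open U \<and> cauchy_bounded_on F U}" "finite \<U>" "S \<subseteq> \<Union>\<U>"
    by (rule compactE[OF assms(1)]) auto
  then show ?thesis
    using cauchy_bounded_on_Union cauchy_bounded_on_subset by blast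
qed

lemma real_analytic_deriv_funpow:
  assumes "real_analytic \<phi>"
  shows "((deriv ^^ k) \<phi> has_real_derivative (deriv ^^ Suc k) \<phi> x) (at x)"
proof -
  obtain r a where "real_power_series \<phi> x r a"
    using assms unfolding real_analytic_def real_power_series_def by blast
  then show ?thesis
    using real_power_series.deriv_funpow_has_derivative real_power_series.radius_pos by fastforce
qed

lemma real_analytic_locally_cauchy_bounded:
  assumes "real_analytic \<phi>"
  shows "\<exists>U. open U \<and> x \<in> U \<and> cauchy_bounded_on (\<lambda>k. (deriv ^^ k) \<phi>) U"
proof -
  obtain r a where ps: "real_power_series \<phi> x r a"
    using assms unfolding real_analytic_def real_power_series_def by blast
  then have r: "r > 0"
    by (rule real_power_series.radius_pos)
  obtain M where "M \<ge> 0" "\<And>k y. \<bar>y - x\<bar> < r / 8 \<Longrightarrow> \<bar>(deriv ^^ k) \<phi> y\<bar> \<le> M * fact k * (4 / r) ^ k"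
    using real_power_series.deriv_funpow_cauchy_bound[OF ps] by blast
  then have "\<forall>k. \<forall>y\<in>ball x (r / 8). \<bar>(deriv ^^ k) \<phi> y\<bar> \<le> M * fact k * (4 / r) ^ k"
    by (simp add: dist_real_def abs_minus_commute)
  then have "cauchy_bounded_on (\<lambda>k. (deriv ^^ k) \<phi>) (ball x (r / 8))"
    unfolding cauchy_bounded_on_def using r \<open>M \<ge> 0\<close> by (meson divide_pos_pos zero_less_numeral)
  then show ?thesis
    using r by (intro exI[of _ "ball x (r / 8)"]) auto
qed

lemma periodic_eq_frac:
  fixes g :: "real \<Rightarrow> 'a"
  assumes "\<And>x. g (x + 1) = g x"
  shows "g x = g (frac x)"
proof -
  have shift: "g (y + real n) = g y" for y n
  proof (induction n)
    case (Suc n)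
    have "g (y + real (Suc n)) = g ((y + real n) + 1)"
      by (simp add: algebra_simps)
    also have "\<dots> = g y"
      using assms Suc by simp
    finally show ?case .
  qed simp
  show ?thesis
  proof (cases "\<lfloor>x\<rfloor> \<ge> 0")
    case True
    then have "x = frac x + real (nat \<lfloor>x\<rfloor>)"
      by (simp add: frac_def)
    then show ?thesis
      using shift[of "frac x" "nat \<lfloor>x\<rfloor>"] by simp
  next
    case False
    then have "frac x = x + real (nat (- \<lfloor>x\<rfloor>))"
      by (simp add: frac_def)
    then show ?thesis
      using shift[of x "nat (- \<lfloor>x\<rfloor>)"] by simp
  qed
qed

lemma periodic_deriv_funpow:
  assumes smooth: "\<And>k x. ((deriv ^^ k) \<phi> has_real_derivative (deriv ^^ Suc k) \<phi> x) (at x)"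
    and periodic: "\<And>x. \<phi> (x + 1) = \<phi> x"
  shows "(deriv ^^ k) \<phi> (x + 1) = (deriv ^^ k) \<phi> x"
proof (induction k arbitrary: x)
  case 0
  then show ?case using periodic by simp
next
  case (Suc k)
  have "((\<lambda>y. (deriv ^^ k) \<phi> (y + 1)) has_real_derivative (deriv ^^ Suc k) \<phi> (x + 1) * 1) (at x)"
    by (rule DERIV_chain2[OF smooth]) (auto intro!: derivative_eq_intros)
  moreover have "(\<lambda>y. (deriv ^^ k) \<phi> (y + 1)) = (deriv ^^ k) \<phi>"
    using Suc by auto
  ultimately have "((deriv ^^ k) \<phi> has_real_derivative (deriv ^^ Suc k) \<phi> (x + 1)) (at x)"
    by simp
  then show ?case
    using DERIV_unique[OF _ smooth[of k x]] by blast
qed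

lemma periodic_real_analytic_cauchy_bounded:
  assumes "real_analytic \<phi>" and "\<And>x. \<phi> (x + 1) = \<phi> x"
  shows "cauchy_bounded_on (\<lambda>k. (deriv ^^ k) \<phi>) UNIV"
proof -
  have "cauchy_bounded_on (\<lambda>k. (deriv ^^ k) \<phi>) {0..1}"
    using real_analytic_locally_cauchy_bounded[OF assms(1)]
    by (intro cauchy_bounded_on_compact) auto
  then obtain C L where "C \<ge> 0" "L > 0" and bound: "\<And>k y. y \<in> {0..1} \<Longrightarrow> \<bar>(deriv ^^ k) \<phi> y\<bar> \<le> C * fact k * L ^ k"
    unfolding cauchy_bounded_on_def by blast
  moreover have "\<bar>(deriv ^^ k) \<phi> x\<bar> \<le> C * fact k * L ^ k" for k x
  proof -
    have "(deriv ^^ k) \<phi> x = (deriv ^^ k) \<phi> (frac x)"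
      using periodic_eq_frac periodic_deriv_funpow[OF real_analytic_deriv_funpow[OF assms(1)] assms(2)]
      by blast
    moreover have "frac x \<in> {0..1}"
      using frac_lt_1[of x] by simp
    ultimately show ?thesis
      using bound by simp
  qed
  ultimately show ?thesis
    unfolding cauchy_bounded_on_def by blast
qed

section \<open>An identity theorem\<close>

lemma cauchy_bounded_vanishing_near:
  fixes F :: "nat \<Rightarrow> real \<Rightarrow> real"
  assumes der: "\<And>k x. (F k has_real_derivative F (Suc k) x) (at x)"
    and bound: "\<And>k x. \<bar>F k x\<bar> \<le> C * fact k * L ^ k" and L: "L > 0"
    and zero: "\<And>k. F k x = 0"
    and near: "\<bar>y - x\<bar> \<le> 1 / (4 * L)"
  shows "F k y = 0"
proof (cases "y = x")
  case True
  then show ?thesis using zero by simp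
next
  case False
  define K where "K = C * fact k * (2 * L) ^ k"
  have C: "C \<ge> 0"
    using bound[of 0 x] by simp
  \<comment> \<open>All Taylor coefficients at x vanish, so F k y equals a Lagrange remainder of arbitrary order.\<close>
  have remainder_bound: "\<bar>F k y\<bar> \<le> K * (1 / 2) ^ n" if "n > 0" for n
  proof -
    have "\<exists>t. (if y < x then y < t \<and> t < x else x < t \<and> t < y) \<and>
        F k y = (\<Sum>m<n. F (k + m) x / fact m * (y - x) ^ m) + F (k + n) t / fact n * (y - x) ^ n"
      by (rule Taylor[of n "\<lambda>m. F (k + m)" "F k" "min x y" "max x y"]) (use that der False in auto)
    then obtain t where "F k y = F (k + n) t / fact n * (y - x) ^ n"
      using zero by auto
    then have "\<bar>F k y\<bar> = \<bar>F (k + n) t\<bar> / fact n * \<bar>y - x\<bar> ^ n"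
      by (simp add: abs_mult power_abs)
    also have "\<dots> \<le> C * fact (k + n) * L ^ (k + n) / fact n * (1 / (4 * L)) ^ n"
      by (intro mult_mono divide_right_mono power_mono bound) (use near C L in auto)
    also have "\<dots> = C * L ^ (k + n) * (fact (n + k) / fact n) * (1 / (4 * L)) ^ n"
      by (simp add: add.commute)
    also have "\<dots> \<le> C * L ^ (k + n) * (fact k * 2 ^ (n + k)) * (1 / (4 * L)) ^ n"
      using C L by (intro mult_mono mult_left_mono fact_add_div_fact_le) auto
    also have "\<dots> = K * (1 / 2) ^ n"
    proof -
      have "(4::real) ^ n = 2 ^ n * 2 ^ n"
        by (simp flip: power_mult_distrib)
      moreover have "\<And>P Q Ln Lk F. P > 0 \<Longrightarrow> Ln > 0 \<Longrightarrow>
          C * (Lk * Ln) * (F * (P * Q)) * (1 / (P * P * Ln)) = C * F * (Q * Lk) * (1 / P)"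
        by (simp add: field_simps)
      ultimately show ?thesis
        using L unfolding K_def by (simp add: power_add power_divide power_mult_distrib)
    qed
    finally show ?thesis .
  qed
  have "(\<lambda>n. K * (1 / 2 :: real) ^ n) \<longlonglongrightarrow> K * 0"
    by (intro tendsto_mult tendsto_const LIMSEQ_realpow_zero) auto
  then have "\<bar>F k y\<bar> \<le> K * 0"
    by (rule LIMSEQ_le_const) (use remainder_bound in \<open>auto intro!: exI[of _ 1]\<close>)
  then show ?thesis by simp
qed

lemma cauchy_bounded_vanishing:
  fixes F :: "nat \<Rightarrow> real \<Rightarrow> real"
  assumes der: "\<And>k x. (F k has_real_derivative F (Suc k) x) (at x)"
    and bounded: "cauchy_bounded_on F UNIV"
    and zero: "\<And>k. F k x0 = 0"
  shows "F k y = 0"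
proof -
  obtain C L where L: "L > 0" and bound: "\<And>k x. \<bar>F k x\<bar> \<le> C * fact k * L ^ k"
    using bounded unfolding cauchy_bounded_on_def by blast
  define \<rho> where "\<rho> = 1 / (4 * L)"
  have \<rho>: "\<rho> > 0"
    using L by (simp add: \<rho>_def)
  \<comment> \<open>Vanishing of all derivatives propagates in steps of length \<rho>.\<close>
  have spread: "\<forall>y. \<bar>y - x0\<bar> \<le> real n * \<rho> \<longrightarrow> (\<forall>k. F k y = 0)" for n
  proof (induction n)
    case 0
    then show ?case using zero by simp
  next
    case (Suc n)
    show ?case
    proof (intro allI impI)
      fix y k
      assume y: "\<bar>y - x0\<bar> \<le> real (Suc n) * \<rho>"
      define y' where "y' = x0 + (y - x0) * (real n / real (Suc n))"
      have "\<bar>y' - x0\<bar> = \<bar>y - x0\<bar> * (real n / real (Suc n))"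
        by (simp add: y'_def abs_mult)
      also have "\<dots> \<le> real (Suc n) * \<rho> * (real n / real (Suc n))"
        by (intro mult_right_mono y) auto
      also have "\<dots> = real n * \<rho>"
        by simp
      finally have zero': "\<forall>k. F k y' = 0"
        using Suc.IH by blast
      have "y - y' = (y - x0) / real (Suc n)"
        by (simp add: y'_def field_simps)
      then have "\<bar>y - y'\<bar> = \<bar>y - x0\<bar> / real (Suc n)"
        by simp
      also have "\<dots> \<le> real (Suc n) * \<rho> / real (Suc n)"
        by (intro divide_right_mono y) auto
      finally have "\<bar>y - y'\<bar> \<le> \<rho>"
        by simp
      then show "F k y = 0"
        using cauchy_bounded_vanishing_near[OF der bound L, of y' y k] zero' by (simp add: \<rho>_def)
    qed
  qed
  obtain n where "\<bar>y - x0\<bar> / \<rho> \<le> real n"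
    using real_arch_simple by blast
  then have "\<bar>y - x0\<bar> \<le> real n * \<rho>"
    using \<rho> by (simp add: field_simps)
  then show ?thesis
    using spread by blast
qed

lemma derivatives_vanish_on_open:
  fixes F :: "nat \<Rightarrow> real \<Rightarrow> real"
  assumes der: "\<And>k x. (F k has_real_derivative F (Suc k) x) (at x)"
    and "open S" and zero: "\<And>x. x \<in> S \<Longrightarrow> F 0 x = 0" and "x \<in> S"
  shows "F k x = 0"
  using \<open>x \<in> S\<close>
proof (induction k arbitrary: x)
  case 0
  then show ?case using zero by simp
next
  case (Suc k)
  have "(F k has_real_derivative 0) (at x)"
    by (rule has_field_derivative_transform_within_open[OF DERIV_const \<open>open S\<close> Suc.prems])
       (use Suc.IH in simp)
  then show ?case
    using DERIV_unique der by blast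
qed

lemma deriv_funpow_eq:
  fixes F :: "nat \<Rightarrow> real \<Rightarrow> real"
  assumes "\<And>k x. (F k has_real_derivative F (Suc k) x) (at x)"
  shows "(deriv ^^ k) (F 0) = F k"
  by (induction k) (auto intro!: DERIV_imp_deriv assms)

section \<open>Compactness\<close>

lemma compact_uniformly_nonvanishing:
  fixes g :: "'i \<Rightarrow> 'a::topological_space \<Rightarrow> real"
  assumes "compact K"
    and cont: "\<And>i. i \<in> I \<Longrightarrow> continuous_on UNIV (g i)"
    and nonzero: "\<And>p. p \<in> K \<Longrightarrow> \<exists>i\<in>I. g i p \<noteq> 0"
  obtains \<epsilon> J where "\<epsilon> > 0" "finite J" "J \<subseteq> I" "\<And>p. p \<in> K \<Longrightarrow> \<exists>i\<in>J. \<epsilon> \<le> \<bar>g i p\<bar>"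
proof -
  define V where "V c = {p. 1 / real (Suc (snd c)) < \<bar>g (fst c) p\<bar>}" for c
  have "open (V c)" if "c \<in> I \<times> UNIV" for c
    unfolding V_def using cont that by (intro open_Collect_less continuous_intros) auto
  moreover have "K \<subseteq> (\<Union>c\<in>I \<times> UNIV. V c)"
  proof
    fix p assume "p \<in> K"
    then obtain i where i: "i \<in> I" "g i p \<noteq> 0"
      using nonzero by blast
    then obtain n where "n > 0" "inverse (real n) < \<bar>g i p\<bar>"
      using ex_inverse_of_nat_less[of "\<bar>g i p\<bar>"] by auto
    moreover have "1 / real (Suc n) \<le> inverse (real n)"
      using \<open>n > 0\<close> by (simp add: divide_simps)
    ultimately have "p \<in> V (i, n)"
      unfolding V_def by simp
    then show "p \<in> (\<Union>c\<in>I \<times> UNIV. V c)"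
      using i by blast
  qed
  ultimately obtain D where D: "D \<subseteq> I \<times> UNIV" "finite D" "K \<subseteq> (\<Union>c\<in>D. V c)"
    using compactE_image[OF \<open>compact K\<close>, of "I \<times> UNIV" V] by blast
  define N where "N = Max (insert 0 (snd ` D))"
  show thesis
  proof
    show "1 / real (Suc N) > 0" "finite (fst ` D)" "fst ` D \<subseteq> I"
      using D by auto
    fix p assume "p \<in> K"
    then obtain c where c: "c \<in> D" "p \<in> V c"
      using D by blast
    have "1 / real (Suc N) \<le> 1 / real (Suc (snd c))"
      using c D by (simp add: N_def divide_simps)
    then show "\<exists>i\<in>fst ` D. 1 / real (Suc N) \<le> \<bar>g i p\<bar>"
      using c unfolding V_def by force
  qed
qed

lemma compact_SigmaSp: "compact (SigmaSp b)"
proof -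
  have "SigmaSp b = Pi\<^sub>E UNIV (\<lambda>n. if n = 0 then {0} else {..<b})"
    unfolding SigmaSp_def PiE_iff by (force split: if_splits)
  moreover have "compactin (product_topology (\<lambda>_. euclidean) UNIV) (Pi\<^sub>E UNIV (\<lambda>n. if n = 0 then {0} else {..<b}))"
    by (auto simp: compactin_PiE intro: finite_imp_compact)
  ultimately show ?thesis
    by (simp add: euclidean_product_topology)
qed

lemma open_first_digits_eq: "open {p :: (nat \<Rightarrow> nat) \<times> (nat \<Rightarrow> nat). fst p 1 = snd p 1}"
proof -
  have "{p :: (nat \<Rightarrow> nat) \<times> (nat \<Rightarrow> nat). fst p 1 = snd p 1} = (\<Union>i. {u. u 1 = i} \<times> {v. v 1 = i})"
    by auto
  moreover have "open {u :: nat \<Rightarrow> nat. u 1 = i}" for i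
    using open_vimage[OF open_discrete, of "\<lambda>u::nat \<Rightarrow> nat. u 1" "{i}"] by (simp add: vimage_def)
  ultimately show ?thesis
    by (auto intro!: open_Times)
qed

definition distinct_first_digit_pairs :: "nat \<Rightarrow> ((nat \<Rightarrow> nat) \<times> (nat \<Rightarrow> nat)) set" where
  "distinct_first_digit_pairs b = {p. fst p \<in> SigmaSp b \<and> snd p \<in> SigmaSp b \<and> fst p 1 \<noteq> snd p 1}"

lemma distinct_first_digit_pairsD:
  "(u, v) \<in> distinct_first_digit_pairs b \<Longrightarrow> u \<in> SigmaSp b \<and> v \<in> SigmaSp b \<and> u \<noteq> v"
  by (auto simp: distinct_first_digit_pairs_def)

lemma compact_distinct_first_digit_pairs: "compact (distinct_first_digit_pairs b)"
proof -
  have "distinct_first_digit_pairs b = (SigmaSp b \<times> SigmaSp b) \<inter> - {p. fst p 1 = snd p 1}"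
    by (auto simp: distinct_first_digit_pairs_def)
  then show ?thesis
    using compact_SigmaSp open_first_digits_eq
    by (simp add: compact_Int_closed compact_Times closed_Compl)
qed

section \<open>The functions Y and Gamma\<close>

lemma oriented_integral_has_derivative:
  fixes g :: "real \<Rightarrow> real"
  assumes cont: "continuous_on UNIV g"
  shows "((\<lambda>x. if 0 \<le> x then integral {0..x} g else - integral {x..0} g) has_real_derivative g x) (at x)"
proof -
  define a where "a = - (\<bar>x\<bar> + 1)"
  define c where "c = \<bar>x\<bar> + 1"
  have ac: "a < 0" "0 < c" "a < x" "x < c"
    by (auto simp: a_def c_def)
  have int: "g integrable_on {a..c}"
    by (intro integrable_continuous_interval continuous_on_subset[OF cont]) auto
  have shift: "(if 0 \<le> y then integral {0..y} g else - integral {y..0} g) = integral {a..y} g - integral {a..0} g"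
    if "y \<in> {a<..<c}" for y
  proof (cases "0 \<le> y")
    case True
    have "integral {a..0} g + integral {0..y} g = integral {a..y} g"
      by (rule Henstock_Kurzweil_Integration.integral_combine)
         (use True ac that in \<open>auto intro: integrable_on_subinterval[OF int]\<close>)
    then show ?thesis using True by simp
  next
    case False
    have "integral {a..y} g + integral {y..0} g = integral {a..0} g"
      by (rule Henstock_Kurzweil_Integration.integral_combine)
         (use False ac that in \<open>auto intro: integrable_on_subinterval[OF int]\<close>)
    then show ?thesis using False by simp
  qed
  have "continuous (at x within {a..c}) g"
    using cont by (simp add: continuous_on_eq_continuous_at continuous_at_imp_continuous_at_within)
  then have "((\<lambda>u. integral {a..u} g) has_vector_derivative g x) (at x within {a..c})"
    using integral_has_vector_derivative_continuous_at[OF int, of x "{}"] ac by simp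
  moreover have "at x within {a..c} = at x"
    by (rule at_within_interior) (use ac in auto)
  ultimately have "((\<lambda>u. integral {a..u} g - integral {a..0} g) has_real_derivative g x) (at x)"
    using DERIV_diff[OF _ DERIV_const, of "\<lambda>u. integral {a..u} g" "g x" x UNIV "integral {a..0} g"]
    by (simp add: has_real_derivative_iff_has_vector_derivative)
  then show ?thesis
    by (rule has_field_derivative_transform_within_open[of _ _ _ "{a<..<c}"]) (use ac shift in auto)
qed

definition digit_offset :: "nat \<Rightarrow> nat \<Rightarrow> (nat \<Rightarrow> nat) \<Rightarrow> real" where
  "digit_offset b n u = (\<Sum>k=1..n. real (u k) / real b ^ (n - k + 1))"

text \<open>The m-th term (for n = m + 1) of the termwise differentiated series for the k-th
  x-derivative of Y(x,u), without the leading minus sign.\<close>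
definition Y_term :: "nat \<Rightarrow> real \<Rightarrow> (real \<Rightarrow> real) \<Rightarrow> nat \<Rightarrow> (nat \<Rightarrow> nat) \<Rightarrow> real \<Rightarrow> nat \<Rightarrow> real" where
  "Y_term b lam \<phi> k u x m = (1 / (real b * lam)) ^ Suc m * (1 / real b ^ Suc m) ^ k *
     (deriv ^^ Suc k) \<phi> (x / real b ^ Suc m + digit_offset b (Suc m) u)"

definition Y_deriv :: "nat \<Rightarrow> real \<Rightarrow> (real \<Rightarrow> real) \<Rightarrow> nat \<Rightarrow> (nat \<Rightarrow> nat) \<Rightarrow> real \<Rightarrow> real" where
  "Y_deriv b lam \<phi> k u x = - (\<Sum>m. Y_term b lam \<phi> k u x m)"

lemma Y_deriv_0: "Y_deriv b lam \<phi> 0 u x = Yfun b lam \<phi> x u"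
  by (simp add: Y_deriv_def Y_term_def Yfun_def digit_offset_def Let_def)

lemma continuous_on_of_nat_apply: "continuous_on UNIV (\<lambda>u::nat \<Rightarrow> nat. real (u i))"
  using continuous_on_compose2[of UNIV "\<lambda>n::nat. real n" UNIV "\<lambda>u. u i"] continuous_on_discrete
  by (auto intro: continuous_intros)


lemma continuous_on_digit_offset: "continuous_on UNIV (digit_offset b n)"
  unfolding digit_offset_def[abs_def] divide_inverse
  by (intro continuous_on_sum continuous_on_mult_right continuous_on_of_nat_apply)


locale Y_series =
  fixes b :: nat and lam :: real and \<phi> :: "real \<Rightarrow> real" and C L :: real
  assumes b_pos: "b > 0" and contracting: "1 < real b * lam"
    and smooth: "\<And>k x. ((deriv ^^ k) \<phi> has_real_derivative (deriv ^^ Suc k) \<phi> x) (at x)"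
    and C: "C \<ge> 0" and L: "L > 0"
    and cauchy_bound: "\<And>k x. \<bar>(deriv ^^ k) \<phi> x\<bar> \<le> C * fact k * L ^ k"
begin

definition \<gamma> :: real where "\<gamma> = 1 / (real b * lam)"

lemma \<gamma>_pos: "0 < \<gamma>" and \<gamma>_less_1: "\<gamma> < 1"
  using contracting by (auto simp: \<gamma>_def)

lemma Y_term_eq: "Y_term b lam \<phi> k u x m = \<gamma> ^ Suc m * ((1 / real b ^ Suc m) ^ k *
     (deriv ^^ Suc k) \<phi> (x / real b ^ Suc m + digit_offset b (Suc m) u))"
  by (simp add: Y_term_def \<gamma>_def mult.assoc)

lemma Y_term_bound: "\<bar>Y_term b lam \<phi> k u x m\<bar> \<le> \<gamma> ^ Suc m * (C * fact (Suc k) * L ^ Suc k)"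
proof -
  have "real b ^ Suc m \<ge> 1"
    using b_pos by (intro one_le_power) simp
  then have scale: "(1 / real b ^ Suc m) ^ k \<le> 1" "0 \<le> (1 / real b ^ Suc m) ^ k"
    by (auto intro!: power_le_one)
  have "\<bar>Y_term b lam \<phi> k u x m\<bar> = \<gamma> ^ Suc m * ((1 / real b ^ Suc m) ^ k *
     \<bar>(deriv ^^ Suc k) \<phi> (x / real b ^ Suc m + digit_offset b (Suc m) u)\<bar>)"
    unfolding Y_term_eq using \<gamma>_pos scale by (simp add: abs_mult)
  also have "\<dots> \<le> \<gamma> ^ Suc m * (1 * (C * fact (Suc k) * L ^ Suc k))"
    by (intro mult_left_mono mult_mono scale cauchy_bound) (use \<gamma>_pos in auto)
  finally show ?thesis by simp
qed

lemma summable_\<gamma>_powers: "summable (\<lambda>m. \<gamma> ^ Suc m * K)"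
  using summable_mult[OF summable_geometric[of \<gamma>], of "\<gamma> * K"] \<gamma>_pos \<gamma>_less_1
  by (simp add: mult_ac)

lemma suminf_\<gamma>_powers: "(\<Sum>m. \<gamma> ^ Suc m * K) = \<gamma> / (1 - \<gamma>) * K"
proof -
  have "(\<Sum>m. (\<gamma> * K) * \<gamma> ^ m) = (\<gamma> * K) * (1 / (1 - \<gamma>))"
    using suminf_mult[OF summable_geometric, of \<gamma> "\<gamma> * K"] suminf_geometric[of \<gamma>] \<gamma>_pos \<gamma>_less_1
    by simp
  then show ?thesis by (simp add: mult_ac)
qed

lemma Y_term_has_derivative:
  "((\<lambda>x. Y_term b lam \<phi> k u x m) has_real_derivative Y_term b lam \<phi> (Suc k) u x m) (at x)"
proof -
  define B where "B = real b ^ Suc m"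
  define c where "c = digit_offset b (Suc m) u"
  have "B > 0"
    using b_pos by (simp add: B_def)
  then have "((\<lambda>x. x / B + c) has_real_derivative 1 / B) (at x)"
    by (auto intro!: derivative_eq_intros)
  from DERIV_chain2[OF smooth this]
  have "((\<lambda>x. \<gamma> ^ Suc m * ((1 / B) ^ k * (deriv ^^ Suc k) \<phi> (x / B + c))) has_real_derivative
      \<gamma> ^ Suc m * ((1 / B) ^ k * ((deriv ^^ Suc (Suc k)) \<phi> (x / B + c) * (1 / B)))) (at x)"
    by (intro DERIV_cmult)
  moreover have "\<gamma> ^ Suc m * ((1 / B) ^ k * ((deriv ^^ Suc (Suc k)) \<phi> (x / B + c) * (1 / B)))
     = \<gamma> ^ Suc m * ((1 / B) ^ Suc k * (deriv ^^ Suc (Suc k)) \<phi> (x / B + c))"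
    by (simp only: power_Suc mult_ac)
  ultimately show ?thesis
    unfolding Y_term_eq B_def c_def by simp
qed

lemma Y_deriv_has_derivative:
  "(Y_deriv b lam \<phi> k u has_real_derivative Y_deriv b lam \<phi> (Suc k) u x) (at x)"
proof -
  have uniform: "uniformly_convergent_on UNIV (\<lambda>N x. \<Sum>m<N. Y_term b lam \<phi> (Suc k) u x m)"
    by (rule Weierstrass_m_test'[of UNIV _ "\<lambda>m. \<gamma> ^ Suc m * (C * fact (Suc (Suc k)) * L ^ Suc (Suc k))"])
       (simp_all only: real_norm_def Y_term_bound summable_\<gamma>_powers)
  have summable: "summable (\<lambda>m. Y_term b lam \<phi> k u 0 m)"
    by (rule summable_comparison_test[OF _ summable_\<gamma>_powers[of "C * fact (Suc k) * L ^ Suc k"]])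
       (simp_all only: real_norm_def Y_term_bound, blast)
  have "\<And>m x. ((\<lambda>x. Y_term b lam \<phi> k u x m) has_field_derivative Y_term b lam \<phi> (Suc k) u x m) (at x within UNIV)"
    by (simp add: Y_term_has_derivative)
  from has_field_derivative_series'(2)[OF convex_UNIV this uniform _ summable, of x]
  have "((\<lambda>x. \<Sum>m. Y_term b lam \<phi> k u x m) has_real_derivative
      (\<Sum>m. Y_term b lam \<phi> (Suc k) u x m)) (at x)"
    by simp
  then show ?thesis
    unfolding Y_deriv_def[abs_def] by (rule DERIV_minus)
qed

lemma Y_deriv_bound: "\<bar>Y_deriv b lam \<phi> k u x\<bar> \<le> (\<gamma> / (1 - \<gamma>) * C * L) * fact k * (2 * L) ^ k"
proof -
  define K where "K = C * fact (Suc k) * L ^ Suc k"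
  have "\<bar>Y_deriv b lam \<phi> k u x\<bar> \<le> (\<Sum>m. \<gamma> ^ Suc m * K)"
    using norm_suminf_le[of "\<lambda>m. Y_term b lam \<phi> k u x m", OF _ summable_\<gamma>_powers[of K]] Y_term_bound
    by (simp add: Y_deriv_def real_norm_def K_def)
  also have "\<dots> = \<gamma> / (1 - \<gamma>) * K"
    by (rule suminf_\<gamma>_powers)
  also have "\<dots> \<le> \<gamma> / (1 - \<gamma>) * (C * L * fact k * (2 * L) ^ k)"
  proof (intro mult_left_mono)
    have "K = C * L * (real (Suc k) * fact k * L ^ k)"
      by (simp add: K_def mult_ac)
    also have "\<dots> \<le> C * L * (2 ^ k * fact k * L ^ k)"
    proof -
      have "Suc k \<le> 2 ^ k"
        by (rule Suc_leI[OF less_exp])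
      then have "real (Suc k) \<le> 2 ^ k"
        by (metis of_nat_le_iff of_nat_numeral of_nat_power)
      then show ?thesis
        using C L by (intro mult_left_mono mult_right_mono) auto
    qed
    finally show "K \<le> C * L * fact k * (2 * L) ^ k"
      by (simp add: power_mult_distrib mult_ac)
    show "0 \<le> \<gamma> / (1 - \<gamma>)"
      using \<gamma>_pos \<gamma>_less_1 by simp
  qed
  finally show ?thesis
    by (simp add: mult_ac)
qed

lemma Y_deriv_diff_cauchy_bounded:
  "cauchy_bounded_on (\<lambda>k x. Y_deriv b lam \<phi> k u x - Y_deriv b lam \<phi> k v x) UNIV"
proof -
  define M where "M = \<gamma> / (1 - \<gamma>) * C * L"
  have "\<bar>Y_deriv b lam \<phi> k u x - Y_deriv b lam \<phi> k v x\<bar> \<le> (2 * M) * fact k * (2 * L) ^ k" for k x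
    using Y_deriv_bound[of k u x] Y_deriv_bound[of k v x] unfolding M_def by linarith
  moreover have "M \<ge> 0"
    using \<gamma>_pos \<gamma>_less_1 C L by (simp add: M_def)
  ultimately show ?thesis
    unfolding cauchy_bounded_on_def using L by (metis mult_nonneg_nonneg zero_le_numeral mult_pos_pos zero_less_numeral)
qed

lemma Y_term_continuous:
  "continuous_on UNIV (\<lambda>p::(nat \<Rightarrow> nat) \<times> real. Y_term b lam \<phi> k (fst p) (snd p) m)"
proof -
  have "continuous_on UNIV (\<lambda>p::(nat \<Rightarrow> nat) \<times> real. digit_offset b (Suc m) (fst p))"
    by (rule continuous_on_compose2[OF continuous_on_digit_offset continuous_on_fst[OF continuous_on_id]]) auto
  then have "continuous_on UNIV (\<lambda>p::(nat \<Rightarrow> nat) \<times> real. snd p / real b ^ Suc m + digit_offset b (Suc m) (fst p))"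
    using b_pos by (intro continuous_intros) auto
  moreover have "continuous_on UNIV ((deriv ^^ Suc k) \<phi>)"
    by (intro continuous_at_imp_continuous_on ballI DERIV_isCont[OF smooth])
  ultimately have "continuous_on UNIV (\<lambda>p::(nat \<Rightarrow> nat) \<times> real.
      (deriv ^^ Suc k) \<phi> (snd p / real b ^ Suc m + digit_offset b (Suc m) (fst p)))"
    using continuous_on_compose2 by blast
  then show ?thesis
    unfolding Y_term_def by (intro continuous_intros)
qed

lemma Y_deriv_continuous:
  "continuous_on UNIV (\<lambda>p::(nat \<Rightarrow> nat) \<times> real. Y_deriv b lam \<phi> k (fst p) (snd p))"
proof -
  have "uniform_limit UNIV (\<lambda>N p. \<Sum>m<N. Y_term b lam \<phi> k (fst p) (snd p) m)
      (\<lambda>p. \<Sum>m. Y_term b lam \<phi> k (fst p) (snd p) m) sequentially"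
    by (rule Weierstrass_m_test[of UNIV _ "\<lambda>m. \<gamma> ^ Suc m * (C * fact (Suc k) * L ^ Suc k)"])
       (simp_all only: real_norm_def Y_term_bound summable_\<gamma>_powers)
  then have "continuous_on UNIV (\<lambda>p::(nat \<Rightarrow> nat) \<times> real. \<Sum>m. Y_term b lam \<phi> k (fst p) (snd p) m)"
    by (rule uniform_limit_theorem[rotated]) (auto intro!: always_eventually continuous_on_sum Y_term_continuous)
  then show ?thesis
    unfolding Y_deriv_def by (intro continuous_intros)
qed

lemma Y_deriv_diff_continuous:
  "continuous_on UNIV (\<lambda>p. Y_deriv b lam \<phi> k (fst (fst p)) (snd p) - Y_deriv b lam \<phi> k (snd (fst p)) (snd p))"
proof -
  have "continuous_on UNIV (\<lambda>p::((nat \<Rightarrow> nat) \<times> (nat \<Rightarrow> nat)) \<times> real. Y_deriv b lam \<phi> k (f (fst p)) (snd p))"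
    if "continuous_on UNIV f" for f
  proof -
    have "continuous_on UNIV (\<lambda>p::((nat \<Rightarrow> nat) \<times> (nat \<Rightarrow> nat)) \<times> real. f (fst p))"
      by (rule continuous_on_compose2[OF that continuous_on_fst[OF continuous_on_id]]) auto
    then have "continuous_on UNIV (\<lambda>p::((nat \<Rightarrow> nat) \<times> (nat \<Rightarrow> nat)) \<times> real. (f (fst p), snd p))"
      by (intro continuous_on_Pair continuous_on_snd continuous_on_id)
    from continuous_on_compose2[OF Y_deriv_continuous this] show ?thesis
      by simp
  qed
  then show ?thesis
    by (intro continuous_on_diff) (simp_all add: continuous_on_fst continuous_on_snd)
qed

lemma Y_deriv_diff_has_derivative:
  "((\<lambda>x. Y_deriv b lam \<phi> k u x - Y_deriv b lam \<phi> k v x) has_real_derivative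
     Y_deriv b lam \<phi> (Suc k) u x - Y_deriv b lam \<phi> (Suc k) v x) (at x)"
  by (intro DERIV_diff Y_deriv_has_derivative)

lemma Y_deriv_diff_nonzero:
  assumes "condH b lam \<phi>" "u \<in> SigmaSp b" "v \<in> SigmaSp b" "u \<noteq> v"
  shows "\<exists>k. Y_deriv b lam \<phi> k u x - Y_deriv b lam \<phi> k v x \<noteq> 0"
proof (rule ccontr)
  assume "\<not> ?thesis"
  then have "Y_deriv b lam \<phi> 0 u y - Y_deriv b lam \<phi> 0 v y = 0" for y
    using cauchy_bounded_vanishing[where F = "\<lambda>k x. Y_deriv b lam \<phi> k u x - Y_deriv b lam \<phi> k v x",
        OF Y_deriv_diff_has_derivative Y_deriv_diff_cauchy_bounded, of x 0 y]
    by blast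
  moreover obtain y where "Yfun b lam \<phi> y v - Yfun b lam \<phi> y u \<noteq> 0"
    using assms unfolding condH_def by blast
  ultimately show False
    by (simp add: Y_deriv_0)
qed

lemma Y_deriv_diff_nonzero_in_unit_interval:
  assumes "condH b lam \<phi>" "u \<in> SigmaSp b" "v \<in> SigmaSp b" "u \<noteq> v"
  shows "\<exists>x\<in>{0<..<1}. Y_deriv b lam \<phi> 0 u x - Y_deriv b lam \<phi> 0 v x \<noteq> 0"
proof (rule ccontr)
  assume "\<not> ?thesis"
  then have "Y_deriv b lam \<phi> k u (1 / 2) - Y_deriv b lam \<phi> k v (1 / 2) = 0" for k
    using derivatives_vanish_on_open[where F = "\<lambda>k x. Y_deriv b lam \<phi> k u x - Y_deriv b lam \<phi> k v x",
        OF Y_deriv_diff_has_derivative, of "{0<..<1}" "1 / 2"]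
    by auto
  then show False
    using Y_deriv_diff_nonzero[OF assms] by blast
qed

lemma Gammafun_has_derivative: "(Gammafun b lam \<phi> w has_real_derivative Y_deriv b lam \<phi> 0 w x) (at x)"
proof -
  have "continuous_on UNIV (\<lambda>t. Yfun b lam \<phi> t w)"
    unfolding Y_deriv_0[symmetric]
    by (intro continuous_at_imp_continuous_on ballI DERIV_isCont[OF Y_deriv_has_derivative])
  from oriented_integral_has_derivative[OF this] show ?thesis
    by (simp add: Gammafun_def[abs_def] Y_deriv_0)
qed

lemma deriv_funpow_Gammafun_diff:
  "(deriv ^^ Suc k) (\<lambda>x. Gammafun b lam \<phi> u x - Gammafun b lam \<phi> v x)
     = (\<lambda>x. Y_deriv b lam \<phi> k u x - Y_deriv b lam \<phi> k v x)"
proof -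
  define F where "F j = (case j of 0 \<Rightarrow> (\<lambda>x. Gammafun b lam \<phi> u x - Gammafun b lam \<phi> v x)
    | Suc i \<Rightarrow> (\<lambda>x. Y_deriv b lam \<phi> i u x - Y_deriv b lam \<phi> i v x))" for j
  have "(F j has_real_derivative F (Suc j) x) (at x)" for j x
    by (cases j) (simp_all add: F_def DERIV_diff Gammafun_has_derivative Y_deriv_diff_has_derivative)
  from deriv_funpow_eq[where F = F, OF this, of "Suc k"] show ?thesis
    by (simp add: F_def)
qed

lemma Fset_1_derivatives:
  assumes "f \<in> Fset b lam \<phi> 1"
  obtains u v where "(u, v) \<in> distinct_first_digit_pairs b"
    and "\<And>k. (deriv ^^ Suc k) f = (\<lambda>x. Y_deriv b lam \<phi> k u x - Y_deriv b lam \<phi> k v x)"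
proof -
  obtain u v where "f = (\<lambda>x. Gammafun b lam \<phi> u x - Gammafun b lam \<phi> v x)"
    and "u \<in> SigmaSp b" "v \<in> SigmaSp b" "u 1 \<noteq> v 1"
    using assms unfolding Fset_def by blast
  then show thesis
    using that[of u v] deriv_funpow_Gammafun_diff by (simp add: distinct_first_digit_pairs_def)
qed

lemma uniform_lower_bound_in_unit_interval:
  assumes H: "condH b lam \<phi>"
  obtains \<epsilon> where "\<epsilon> > 0"
    and "\<And>u v. (u, v) \<in> distinct_first_digit_pairs b \<Longrightarrow>
           \<exists>x\<in>{0<..<1}. \<epsilon> \<le> \<bar>Y_deriv b lam \<phi> 0 u x - Y_deriv b lam \<phi> 0 v x\<bar>"
proof -
  let ?g = "\<lambda>x q. Y_deriv b lam \<phi> 0 (fst q) x - Y_deriv b lam \<phi> 0 (snd q) x"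
  obtain \<epsilon> J where "\<epsilon> > 0" "J \<subseteq> {0<..<1}"
    and bound: "\<And>q. q \<in> distinct_first_digit_pairs b \<Longrightarrow> \<exists>x\<in>J. \<epsilon> \<le> \<bar>?g x q\<bar>"
  proof (rule compact_uniformly_nonvanishing[of _ "{0<..<1}" ?g, OF compact_distinct_first_digit_pairs])
    show "continuous_on UNIV (?g x)" for x
      using continuous_on_compose2[OF Y_deriv_diff_continuous[of 0]
          continuous_on_Pair[OF continuous_on_id continuous_on_const[of UNIV x]]]
      by simp
    show "\<exists>x\<in>{0<..<1}. ?g x q \<noteq> 0" if "q \<in> distinct_first_digit_pairs b" for q
      using Y_deriv_diff_nonzero_in_unit_interval[OF H] distinct_first_digit_pairsD[of "fst q" "snd q"] that
      by simp
  qed blast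
  then show thesis
    using that[of \<epsilon>] by force
qed

lemma uniform_lower_bound_on_jets:
  assumes H: "condH b lam \<phi>"
  obtains \<epsilon> Q where "\<epsilon> > 0" and "Q > 0"
    and "\<And>u v x. (u, v) \<in> distinct_first_digit_pairs b \<Longrightarrow> x \<in> {0..1} \<Longrightarrow>
           \<exists>k<Q. \<epsilon> \<le> \<bar>Y_deriv b lam \<phi> k u x - Y_deriv b lam \<phi> k v x\<bar>"
proof -
  let ?g = "\<lambda>k p. Y_deriv b lam \<phi> k (fst (fst p)) (snd p) - Y_deriv b lam \<phi> k (snd (fst p)) (snd p)"
  obtain \<epsilon> J where "\<epsilon> > 0" "finite J"
    and bound: "\<And>p. p \<in> distinct_first_digit_pairs b \<times> {0..1} \<Longrightarrow> \<exists>k\<in>J. \<epsilon> \<le> \<bar>?g k p\<bar>"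
  proof (rule compact_uniformly_nonvanishing[of "distinct_first_digit_pairs b \<times> {0..1}" UNIV ?g])
    show "compact (distinct_first_digit_pairs b \<times> {0..1::real})"
      by (intro compact_Times compact_distinct_first_digit_pairs compact_Icc)
    show "\<exists>k\<in>UNIV. ?g k p \<noteq> 0" if "p \<in> distinct_first_digit_pairs b \<times> {0..1}" for p
      using Y_deriv_diff_nonzero[OF H, of "fst (fst p)" "snd (fst p)" "snd p"]
        distinct_first_digit_pairsD[of "fst (fst p)" "snd (fst p)"] that
      by (auto simp: mem_Times_iff)
  qed (use Y_deriv_diff_continuous in blast)+
  show thesis
  proof (rule that)
    show "\<epsilon> > 0" "Suc (Max (insert 0 J)) > 0"
      using \<open>\<epsilon> > 0\<close> by simp_all
    fix u v and x :: real
    assume "(u, v) \<in> distinct_first_digit_pairs b" "x \<in> {0..1}"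
    then obtain k where "k \<in> J" "\<epsilon> \<le> \<bar>?g k ((u, v), x)\<bar>"
      using bound by force
    moreover have "k < Suc (Max (insert 0 J))"
      using \<open>finite J\<close> \<open>k \<in> J\<close> by (simp add: less_Suc_eq_le)
    ultimately show "\<exists>k<Suc (Max (insert 0 J)). \<epsilon> \<le> \<bar>Y_deriv b lam \<phi> k u x - Y_deriv b lam \<phi> k v x\<bar>"
      by auto
  qed
qed

lemma Fset_1_deriv_bounded:
  assumes "f \<in> Fset b lam \<phi> 1"
  shows "bdd_above ((\<lambda>x. \<bar>deriv f x\<bar>) ` S)"
proof -
  obtain u v where "\<And>k. (deriv ^^ Suc k) f = (\<lambda>x. Y_deriv b lam \<phi> k u x - Y_deriv b lam \<phi> k v x)"
    using Fset_1_derivatives[OF assms] by blast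
  from this[of 0] have "deriv f = (\<lambda>x. Y_deriv b lam \<phi> 0 u x - Y_deriv b lam \<phi> 0 v x)"
    by simp
  moreover obtain M L' where "\<And>y. \<bar>Y_deriv b lam \<phi> 0 u y - Y_deriv b lam \<phi> 0 v y\<bar> \<le> M * fact 0 * L' ^ 0"
    using Y_deriv_diff_cauchy_bounded[of u v] unfolding cauchy_bounded_on_def by blast
  ultimately show ?thesis
    by (intro bdd_aboveI2[where M = M]) simp
qed

lemma Fset_1_derivative_lower_bounds:
  assumes "condH b lam \<phi>"
  shows "\<exists>\<epsilon>>0. \<exists>Q::nat. Q > 0 \<and>
           (\<forall>f\<in>Fset b lam \<phi> 1.
              (SUP x\<in>{0..1}. \<bar>deriv f x\<bar>) \<ge> \<epsilon> \<and>
              (\<forall>x\<in>{0..1::real}. \<exists>k\<in>{1..Q}. \<bar>(deriv ^^ k) f x\<bar> \<ge> \<epsilon>))"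
proof -
  obtain \<epsilon>1 where "\<epsilon>1 > 0"
    and sup_bound: "\<And>u v. (u, v) \<in> distinct_first_digit_pairs b \<Longrightarrow>
           \<exists>x\<in>{0<..<1}. \<epsilon>1 \<le> \<bar>Y_deriv b lam \<phi> 0 u x - Y_deriv b lam \<phi> 0 v x\<bar>"
    using uniform_lower_bound_in_unit_interval[OF assms] by blast
  obtain \<epsilon>2 Q where "\<epsilon>2 > 0" "Q > 0"
    and jet_bound: "\<And>u v x. (u, v) \<in> distinct_first_digit_pairs b \<Longrightarrow> x \<in> {0..1} \<Longrightarrow>
           \<exists>k<Q. \<epsilon>2 \<le> \<bar>Y_deriv b lam \<phi> k u x - Y_deriv b lam \<phi> k v x\<bar>"
    using uniform_lower_bound_on_jets[OF assms] by blast
  define \<epsilon> where "\<epsilon> = min \<epsilon>1 \<epsilon>2"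
  have "(SUP x\<in>{0..1}. \<bar>deriv f x\<bar>) \<ge> \<epsilon> \<and> (\<forall>x\<in>{0..1::real}. \<exists>k\<in>{1..Q}. \<bar>(deriv ^^ k) f x\<bar> \<ge> \<epsilon>)"
    if f: "f \<in> Fset b lam \<phi> 1" for f
  proof -
    obtain u v where uv: "(u, v) \<in> distinct_first_digit_pairs b"
      and derivs: "\<And>k. (deriv ^^ Suc k) f = (\<lambda>x. Y_deriv b lam \<phi> k u x - Y_deriv b lam \<phi> k v x)"
      using Fset_1_derivatives[OF f] by blast
    obtain x where "x \<in> {0<..<1}" "\<epsilon> \<le> \<bar>deriv f x\<bar>"
      using sup_bound[OF uv] derivs[of 0] by (auto simp: \<epsilon>_def)
    then have "(SUP x\<in>{0..1}. \<bar>deriv f x\<bar>) \<ge> \<epsilon>"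
      using cSUP_upper2[OF Fset_1_deriv_bounded[OF f], of x] by simp
    moreover have "\<exists>k\<in>{1..Q}. \<bar>(deriv ^^ k) f x\<bar> \<ge> \<epsilon>" if x: "x \<in> {0..1}" for x
    proof -
      obtain k where "k < Q" "\<epsilon>2 \<le> \<bar>Y_deriv b lam \<phi> k u x - Y_deriv b lam \<phi> k v x\<bar>"
        using jet_bound[OF uv x] by blast
      then show ?thesis
        using derivs[of k] by (intro bexI[of _ "Suc k"]) (auto simp: \<epsilon>_def)
    qed
    ultimately show ?thesis
      by blast
  qed
  moreover have "\<epsilon> > 0"
    using \<open>\<epsilon>1 > 0\<close> \<open>\<epsilon>2 > 0\<close> by (simp add: \<epsilon>_def)
  ultimately show ?thesis
    using \<open>Q > 0\<close> by blast
qed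

end

theorem mainTheorem16:
  fixes b :: nat and lam :: real and \<phi> :: "real \<Rightarrow> real"
  assumes "b \<ge> 2"
    and "1 / real b < lam" and "lam < 1"
    and "real_analytic \<phi>"
    and "\<And>x. \<phi> (x + 1) = \<phi> x"
    and "condH b lam \<phi>"
  shows "\<exists>\<epsilon>1>0. \<exists>Q1::nat. Q1 > 0 \<and>
           (\<forall>f\<in>Fset b lam \<phi> 1.
              (SUP x\<in>{0..1}. \<bar>deriv f x\<bar>) \<ge> \<epsilon>1 \<and>
              (\<forall>x\<in>{0..1::real}. \<exists>k\<in>{1..Q1}. \<bar>(deriv ^^ k) f x\<bar> \<ge> \<epsilon>1))"
proof -
  obtain C L where CL: "C \<ge> 0" "L > 0" "\<And>k x. \<bar>(deriv ^^ k) \<phi> x\<bar> \<le> C * fact k * L ^ k"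
    using periodic_real_analytic_cauchy_bounded[OF assms(4,5)] unfolding cauchy_bounded_on_def by blast
  have "1 < real b * lam"
    using assms(1,2) by (simp add: field_simps)
  then interpret Y_series b lam \<phi> C L
    using assms(1) CL real_analytic_deriv_funpow[OF assms(4)] by unfold_locales simp_all
  show ?thesis
    using Fset_1_derivative_lower_bounds[OF assms(6)] .
qed

end
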